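(* Let $G$ be a complete bisplit graph with vertex partition $X,Y,Z$. Then the sparing number of $G$ is the product of the cardinalities of the two of these three sets having minimum cardinality.
   Context: A bisplit graph is a graph whose vertex set is partitioned into three independent sets $X,Y,Z$ such that $Y\cup Z$ induces a complete bipartite subgraph; it is a complete bisplit graph if, in addition, every vertex of $X$ is adjacent to every vertex of $Y\cup Z$ (so $G$ is a complete tripartite graph with parts $X,Y,Z$). Let $\mathbb{N}_0$ be the set of non-negative integers; for $A,B\subseteq\mathbb{N}_0$, $A+B=\{a+b:a\in A,b\in B\}$. An integer additive set-indexer (IASI) of a graph $G$ is an injective map $f:V(G)\to\mathcal{P}(\mathbb{N}_0)$ such that $f^+:E(G)\to\mathcal{P}(\mathbb{N}_0)$, $f^+(uv)=f(u)+f(v)$, is injective. A weak IASI is an IASI with $|f^+(uv)|=\max(|f(u)|,|f(v)|)$ for every edge $uv$. An edge $e$ is mono-indexed if $|f^+(e)|=1$. The sparing number $\varphi(G)$ is the minimum number of mono-indexed edges over all weak IASIs of $G$. *)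

theory Defs
  imports Main
begin

definition simple_graph :: "'a set \<Rightarrow> 'a set set \<Rightarrow> bool" where
  "simple_graph V E \<longleftrightarrow> finite V \<and> (\<forall>e\<in>E. \<exists>u v. e = {u, v} \<and> u \<noteq> v \<and> u \<in> V \<and> v \<in> V)"

definition complete_bisplit :: "'a set \<Rightarrow> 'a set set \<Rightarrow> 'a set \<Rightarrow> 'a set \<Rightarrow> 'a set \<Rightarrow> bool" where
  "complete_bisplit V E X Y Z \<longleftrightarrow>
     simple_graph V E \<and> V = X \<union> Y \<union> Z \<and>
     X \<noteq> {} \<and> Y \<noteq> {} \<and> Z \<noteq> {} \<and>
     X \<inter> Y = {} \<and> Y \<inter> Z = {} \<and> X \<inter> Z = {} \<and>
     E = {{u, v} |u v. (u \<in> X \<and> v \<in> Y) \<or> (u \<in> Y \<and> v \<in> Z) \<or> (u \<in> X \<and> v \<in> Z)}"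

definition sumset :: "nat set \<Rightarrow> nat set \<Rightarrow> nat set" where
  "sumset A B = {a + b |a b. a \<in> A \<and> b \<in> B}"

definition iasi :: "'a set \<Rightarrow> 'a set set \<Rightarrow> ('a \<Rightarrow> nat set) \<Rightarrow> bool" where
  "iasi V E f \<longleftrightarrow>
     (\<forall>v\<in>V. f v \<noteq> {} \<and> finite (f v)) \<and> inj_on f V \<and>
     (\<forall>u v u' v'. {u, v} \<in> E \<longrightarrow> {u', v'} \<in> E \<longrightarrow>
        sumset (f u) (f v) = sumset (f u') (f v') \<longrightarrow> {u, v} = {u', v'})"

definition weak_iasi :: "'a set \<Rightarrow> 'a set set \<Rightarrow> ('a \<Rightarrow> nat set) \<Rightarrow> bool" where
  "weak_iasi V E f \<longleftrightarrow> iasi V E f \<and>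
     (\<forall>u v. {u, v} \<in> E \<longrightarrow> card (sumset (f u) (f v)) = max (card (f u)) (card (f v)))"

definition mono_indexed_edges :: "'a set set \<Rightarrow> ('a \<Rightarrow> nat set) \<Rightarrow> 'a set set" where
  "mono_indexed_edges E f = {e \<in> E. \<exists>u v. e = {u, v} \<and> card (sumset (f u) (f v)) = 1}"

definition sparing_number :: "'a set \<Rightarrow> 'a set set \<Rightarrow> nat" where
  "sparing_number V E = (LEAST n. \<exists>f. weak_iasi V E f \<and> n = card (mono_indexed_edges E f))"

end

theory Submission
  imports Defs
begin

text \<open>Since \<open>|A + B| \<ge> |A| + |B| - 1\<close>, a weak IASI gives every edge an endpoint with a
  singleton label. Hence the vertices with larger labels are pairwise non-adjacent and lie in a
  single part, and all edges between the other two parts are mono-indexed. Conversely, giving the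
  vertices of a largest part two-element labels \<open>{0, c}\<close> and all others singletons, with codes
  chosen so that every edge sum determines its endpoints, leaves exactly the edges between the two
  smaller parts mono-indexed.\<close>

lemma sumset_commute: "sumset A B = sumset B A"
  unfolding sumset_def by (metis add.commute)

lemma sumset_singletons [simp]: "sumset {a} {b} = {a + b}"
  unfolding sumset_def by auto

lemma sumset_insert_0_singleton [simp]: "sumset {0, c} {d} = {d, c + d}"
  unfolding sumset_def by auto

lemma finite_sumset: "finite A \<Longrightarrow> finite B \<Longrightarrow> finite (sumset A B)"
proof -
  have "sumset A B = (\<lambda>(a, b). a + b) ` (A \<times> B)"
    unfolding sumset_def by auto
  then show "finite A \<Longrightarrow> finite B \<Longrightarrow> finite (sumset A B)" by simp
qed

text \<open>The sums \<open>a + Min B\<close> and \<open>Max A + b\<close> are distinct except for \<open>Max A + Min B\<close>.\<close>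

lemma card_sumset_ge:
  assumes "finite A" "finite B" "A \<noteq> {}" "B \<noteq> {}"
  shows "card A + card B \<le> card (sumset A B) + 1"
proof -
  define a b where "a = Max A" and "b = Min B"
  have a: "a \<in> A" "\<And>x. x \<in> A \<Longrightarrow> x \<le> a" and b: "b \<in> B" "\<And>y. y \<in> B \<Longrightarrow> b \<le> y"
    using assms unfolding a_def b_def by simp_all
  define S T where "S = (\<lambda>x. x + b) ` A" and "T = (\<lambda>y. a + y) ` B"
  have "finite S" "finite T"
    unfolding S_def T_def using assms by simp_all
  have "card S = card A" "card T = card B"
    unfolding S_def T_def by (simp_all add: card_image)
  moreover have "S \<inter> T \<subseteq> {a + b}"
    unfolding S_def T_def using a(2) b(2) by fastforce
  then have "card (S \<inter> T) \<le> 1"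
    using card_mono[OF _ \<open>S \<inter> T \<subseteq> {a + b}\<close>] by simp
  moreover have "S \<union> T \<subseteq> sumset A B"
    unfolding S_def T_def sumset_def using a(1) b(1) by blast
  then have "card (S \<union> T) \<le> card (sumset A B)"
    using card_mono[OF finite_sumset[OF assms(1,2)]] by blast
  moreover have "card S + card T = card (S \<union> T) + card (S \<inter> T)"
    using \<open>finite S\<close> \<open>finite T\<close> by (rule card_Un_Int)
  ultimately show ?thesis by linarith
qed

lemma simple_graph_edge_vertices:
  "simple_graph V E \<Longrightarrow> {u, v} \<in> E \<Longrightarrow> u \<in> V \<and> v \<in> V"
  unfolding simple_graph_def by (metis doubleton_eq_iff)

lemma simple_graph_finite_edges:
  assumes "simple_graph V E"
  shows "finite E"
proof (rule finite_subset)
  show "E \<subseteq> Pow V"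
    using assms unfolding simple_graph_def by auto
  show "finite (Pow V)"
    using assms unfolding simple_graph_def by simp
qed

lemma weak_iasi_edge_singleton:
  assumes "simple_graph V E" "weak_iasi V E f" "{u, v} \<in> E"
  shows "card (f u) = 1 \<or> card (f v) = 1"
proof -
  have "u \<in> V" "v \<in> V"
    using assms(1,3) by (simp_all add: simple_graph_edge_vertices)
  then have labels: "finite (f u)" "f u \<noteq> {}" "finite (f v)" "f v \<noteq> {}"
    using assms(2) unfolding weak_iasi_def iasi_def by blast+
  then have "card (f u) + card (f v) \<le> card (sumset (f u) (f v)) + 1"
    by (intro card_sumset_ge)
  moreover have "card (sumset (f u) (f v)) = max (card (f u)) (card (f v))"
    using assms(2,3) unfolding weak_iasi_def by blast
  moreover have "card (f u) \<ge> 1" "card (f v) \<ge> 1"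
    using labels by (simp_all add: Suc_le_eq card_gt_0_iff)
  ultimately show ?thesis by linarith
qed

lemma card_doubletons:
  assumes "P \<inter> Q = {}"
  shows "card ((\<lambda>(p, q). {p, q}) ` (P \<times> Q)) = card P * card Q"
proof -
  have "inj_on (\<lambda>(p, q). {p, q}) (P \<times> Q)"
    using assms by (auto simp: inj_on_def doubleton_eq_iff)
  then show ?thesis
    by (simp add: card_image card_cartesian_product)
qed

lemma card_mono_indexed_edges_ge:
  assumes "simple_graph V E" "P \<subseteq> V" "Q \<subseteq> V" "P \<inter> Q = {}"
    and edges: "\<And>p q. p \<in> P \<Longrightarrow> q \<in> Q \<Longrightarrow> {p, q} \<in> E"
    and singletons: "\<And>w. w \<in> P \<union> Q \<Longrightarrow> card (f w) = 1"
  shows "card P * card Q \<le> card (mono_indexed_edges E f)"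
proof -
  have "(\<lambda>(p, q). {p, q}) ` (P \<times> Q) \<subseteq> mono_indexed_edges E f"
  proof clarify
    fix p q assume pq: "p \<in> P" "q \<in> Q"
    then obtain a b where "f p = {a}" "f q = {b}"
      using singletons by (metis UnI1 UnI2 card_1_singletonE)
    then have "card (sumset (f p) (f q)) = 1"
      by simp
    then show "{p, q} \<in> mono_indexed_edges E f"
      unfolding mono_indexed_edges_def using edges[OF pq] by blast
  qed
  moreover have "finite (mono_indexed_edges E f)"
    using simple_graph_finite_edges[OF assms(1)] unfolding mono_indexed_edges_def by simp
  ultimately show ?thesis
    using card_mono card_doubletons[OF assms(4)] by metis
qed

lemma sparing_number_le: "weak_iasi V E f \<Longrightarrow> sparing_number V E \<le> card (mono_indexed_edges E f)"
  unfolding sparing_number_def by (rule Least_le) blast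

lemma sparing_number_attained:
  assumes "weak_iasi V E f"
  obtains g where "weak_iasi V E g" "sparing_number V E = card (mono_indexed_edges E g)"
  using LeastI_ex[of "\<lambda>n. \<exists>f. weak_iasi V E f \<and> n = card (mono_indexed_edges E f)"] assms
  unfolding sparing_number_def by blast

lemma complete_bisplit_swap_first: "complete_bisplit V E X Y Z \<Longrightarrow> complete_bisplit V E Y X Z"
  unfolding complete_bisplit_def by (auto simp: insert_commute)

lemma complete_bisplit_swap_last: "complete_bisplit V E X Y Z \<Longrightarrow> complete_bisplit V E X Z Y"
  unfolding complete_bisplit_def by (auto simp: insert_commute)

lemma complete_bisplit_edge:
  "complete_bisplit V E X Y Z \<Longrightarrow> u \<in> X \<and> v \<in> Y \<or> u \<in> Y \<and> v \<in> Z \<or> u \<in> X \<and> v \<in> Z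
    \<Longrightarrow> {u, v} \<in> E"
  unfolding complete_bisplit_def by blast

lemma complete_bisplit_edge_cases_sym:
  assumes "complete_bisplit V E X Y Z" "{u, v} \<in> E"
    and sym: "\<And>u v. P u v \<Longrightarrow> P v u"
    and "\<And>x y. x \<in> X \<Longrightarrow> y \<in> Y \<Longrightarrow> P x y"
    and "\<And>y z. y \<in> Y \<Longrightarrow> z \<in> Z \<Longrightarrow> P y z"
    and "\<And>x z. x \<in> X \<Longrightarrow> z \<in> Z \<Longrightarrow> P x z"
  shows "P u v"
proof -
  obtain a b where ab: "{u, v} = {a, b}"
    and "a \<in> X \<and> b \<in> Y \<or> a \<in> Y \<and> b \<in> Z \<or> a \<in> X \<and> b \<in> Z"
    using assms(1,2) unfolding complete_bisplit_def by blast
  then have "P a b"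
    using assms(4-6) by blast
  moreover have "u = a \<and> v = b \<or> u = b \<and> v = a"
    using ab by (simp add: doubleton_eq_iff)
  ultimately show ?thesis
    using sym by blast
qed

lemma complete_bisplit_mono_indexed_edges_ge:
  assumes G: "complete_bisplit V E X Y Z" and f: "weak_iasi V E f"
  shows "min (card X * card Y) (min (card X * card Z) (card Y * card Z))
           \<le> card (mono_indexed_edges E f)"
proof -
  have sg: "simple_graph V E" and parts: "X \<subseteq> V" "Y \<subseteq> V" "Z \<subseteq> V"
    and disj: "X \<inter> Y = {}" "Y \<inter> Z = {}" "X \<inter> Z = {}"
    using G unfolding complete_bisplit_def by auto
  have edge: "\<And>u v. u \<in> X \<and> v \<in> Y \<or> u \<in> Y \<and> v \<in> Z \<or> u \<in> X \<and> v \<in> Z \<Longrightarrow> {u, v} \<in> E"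
    using G by (rule complete_bisplit_edge)
  have adjacent_singleton: "card (f u) = 1 \<or> card (f v) = 1"
    if "u \<in> X \<and> v \<in> Y \<or> u \<in> Y \<and> v \<in> Z \<or> u \<in> X \<and> v \<in> Z" for u v
    using weak_iasi_edge_singleton[OF sg f edge[OF that]] .
  consider "\<forall>w \<in> Y \<union> Z. card (f w) = 1" | "\<forall>w \<in> X \<union> Z. card (f w) = 1"
    | "\<forall>w \<in> X \<union> Y. card (f w) = 1"
    using adjacent_singleton by blast
  then show ?thesis
  proof cases
    case 1
    then have "card Y * card Z \<le> card (mono_indexed_edges E f)"
      using card_mono_indexed_edges_ge[OF sg parts(2,3) disj(2)] edge by blast
    then show ?thesis by linarith
  next
    case 2
    then have "card X * card Z \<le> card (mono_indexed_edges E f)"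
      using card_mono_indexed_edges_ge[OF sg parts(1,3) disj(3)] edge by blast
    then show ?thesis by linarith
  next
    case 3
    then have "card X * card Y \<le> card (mono_indexed_edges E f)"
      using card_mono_indexed_edges_ge[OF sg parts(1,2) disj(1)] edge by blast
    then show ?thesis by linarith
  qed
qed

locale bisplit_labelling =
  fixes V :: "'a set" and E :: "'a set set" and X Y Z :: "'a set"
    and g :: "'a \<Rightarrow> nat" and M :: nat
  assumes bisplit: "complete_bisplit V E X Y Z"
    and code_inj: "inj_on g V"
    and code_range: "\<And>w. w \<in> V \<Longrightarrow> 1 \<le> g w \<and> g w < M"
begin

text \<open>The labels read \<open>M\<close>-adically: an edge between \<open>Y\<close> and \<open>Z\<close> gets the single number with
  digits \<open>g z, g y\<close>, while the \<open>0\<close> in the labels of \<open>X\<close> makes every edge at \<open>X\<close> two-element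
  indexed, with difference \<open>g x\<close>.\<close>

definition label :: "'a \<Rightarrow> nat set" where
  "label w = (if w \<in> X then {0, g w} else if w \<in> Y then {g w} else {g w * M})"

definition decode :: "nat set \<Rightarrow> 'a set" where
  "decode T = {x \<in> X. card T = 2 \<and> g x = Max T - Min T} \<union> {y \<in> Y. g y = Min T mod M}
     \<union> {z \<in> Z. g z = Min T div M}"

lemma parts_subset: "X \<subseteq> V" "Y \<subseteq> V" "Z \<subseteq> V"
  using bisplit unfolding complete_bisplit_def by auto

lemma parts_disjoint: "X \<inter> Y = {}" "Y \<inter> Z = {}" "X \<inter> Z = {}"
  using bisplit unfolding complete_bisplit_def by auto

lemma label_X: "x \<in> X \<Longrightarrow> label x = {0, g x}"
  and label_Y: "y \<in> Y \<Longrightarrow> label y = {g y}"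
  and label_Z: "z \<in> Z \<Longrightarrow> label z = {g z * M}"
  unfolding label_def using parts_disjoint by auto

lemma sumset_label_XY: "x \<in> X \<Longrightarrow> y \<in> Y \<Longrightarrow> sumset (label x) (label y) = {g y, g x + g y}"
  and sumset_label_XZ:
    "x \<in> X \<Longrightarrow> z \<in> Z \<Longrightarrow> sumset (label x) (label z) = {g z * M, g x + g z * M}"
  and sumset_label_YZ: "y \<in> Y \<Longrightarrow> z \<in> Z \<Longrightarrow> sumset (label y) (label z) = {g y + g z * M}"
  by (simp_all add: label_X label_Y label_Z)

lemma code_fiber: "S \<subseteq> V \<Longrightarrow> w \<in> S \<Longrightarrow> {w' \<in> S. g w' = g w} = {w}"
  using code_inj unfolding inj_on_def by blast

lemma code_nonzero: "S \<subseteq> V \<Longrightarrow> {w \<in> S. g w = 0} = {}"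
  using code_range by fastforce

lemma decode_XY:
  assumes "x \<in> X" "y \<in> Y"
  shows "decode {g y, g x + g y} = {x, y}"
proof -
  have "1 \<le> g x" "1 \<le> g y" "g y < M"
    using assms parts_subset code_range by blast+
  then have "card {g y, g x + g y} = 2" "Min {g y, g x + g y} = g y"
    "Max {g y, g x + g y} = g x + g y" "g y mod M = g y" "g y div M = 0"
    by auto
  then show ?thesis
    unfolding decode_def using assms parts_subset
    by (simp add: code_fiber code_nonzero insert_commute)
qed

lemma decode_XZ:
  assumes "x \<in> X" "z \<in> Z"
  shows "decode {g z * M, g x + g z * M} = {x, z}"
proof -
  have "1 \<le> g x" "1 \<le> g z" "g z < M"
    using assms parts_subset code_range by blast+
  then have "card {g z * M, g x + g z * M} = 2" "Min {g z * M, g x + g z * M} = g z * M"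
    "Max {g z * M, g x + g z * M} = g x + g z * M" "g z * M mod M = 0" "g z * M div M = g z"
    by auto
  then show ?thesis
    unfolding decode_def using assms parts_subset
    by (simp add: code_fiber code_nonzero insert_commute)
qed

lemma decode_YZ:
  assumes "y \<in> Y" "z \<in> Z"
  shows "decode {g y + g z * M} = {y, z}"
proof -
  have "g y < M" "1 \<le> g z"
    using assms parts_subset code_range by blast+
  then have "(g y + g z * M) mod M = g y" "(g y + g z * M) div M = g z"
    by auto
  then show ?thesis
    unfolding decode_def using assms parts_subset by (simp add: code_fiber insert_commute)
qed

lemma decode_sumset_label:
  assumes "{u, v} \<in> E"
  shows "decode (sumset (label u) (label v)) = {u, v}"
  using bisplit assms
proof (rule complete_bisplit_edge_cases_sym)
  show "decode (sumset (label v) (label u)) = {v, u}"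
    if "decode (sumset (label u) (label v)) = {u, v}" for u v
    using that by (simp add: sumset_commute insert_commute)
qed (simp_all add: sumset_label_XY sumset_label_XZ sumset_label_YZ decode_XY decode_XZ decode_YZ)

lemma code_from_label:
  assumes "w \<in> V"
  shows "g w = (if 0 \<in> label w then Max (label w)
                else if Max (label w) < M then Max (label w) else Max (label w) div M)"
proof -
  have "w \<in> X \<or> w \<in> Y \<or> w \<in> Z" and "1 \<le> g w" "g w < M"
    using assms bisplit code_range unfolding complete_bisplit_def by auto
  then show ?thesis
    by (auto simp: label_X label_Y label_Z)
qed

lemma inj_on_label: "inj_on label V"
  by (rule inj_onI) (metis code_from_label code_inj inj_onD)

lemma card_sumset_label:
  assumes "{u, v} \<in> E"
  shows "card (sumset (label u) (label v)) = max (card (label u)) (card (label v))"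
  using bisplit assms
proof (rule complete_bisplit_edge_cases_sym)
  fix x y assume "x \<in> X" "y \<in> Y"
  moreover have "0 < g x" using \<open>x \<in> X\<close> parts_subset code_range by fastforce
  ultimately show "card (sumset (label x) (label y)) = max (card (label x)) (card (label y))"
    by (simp add: sumset_label_XY label_X label_Y)
next
  fix x z assume "x \<in> X" "z \<in> Z"
  moreover have "0 < g x" using \<open>x \<in> X\<close> parts_subset code_range by fastforce
  ultimately show "card (sumset (label x) (label z)) = max (card (label x)) (card (label z))"
    by (simp add: sumset_label_XZ label_X label_Z)
qed (simp_all add: sumset_commute max.commute sumset_label_YZ label_Y label_Z)

lemma weak_iasi_label: "weak_iasi V E label"
  unfolding weak_iasi_def iasi_def
proof (intro conjI ballI allI impI)
  fix w
  show "label w \<noteq> {}" "finite (label w)"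
    by (simp_all add: label_def)
next
  fix u v u' v'
  assume "{u, v} \<in> E" "{u', v'} \<in> E" "sumset (label u) (label v) = sumset (label u') (label v')"
  then show "{u, v} = {u', v'}"
    by (metis decode_sumset_label)
qed (simp_all add: inj_on_label card_sumset_label)

lemma mono_indexed_edges_label: "mono_indexed_edges E label \<subseteq> (\<lambda>(y, z). {y, z}) ` (Y \<times> Z)"
proof
  fix e assume "e \<in> mono_indexed_edges E label"
  then obtain u v where e: "e = {u, v}" "{u, v} \<in> E" "card (sumset (label u) (label v)) = 1"
    unfolding mono_indexed_edges_def by blast
  have "card (sumset (label u) (label v)) = 1 \<longrightarrow> {u, v} \<in> (\<lambda>(y, z). {y, z}) ` (Y \<times> Z)"
    using bisplit e(2)
  proof (rule complete_bisplit_edge_cases_sym)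
    fix x y assume "x \<in> X" "y \<in> Y"
    moreover have "0 < g x" using \<open>x \<in> X\<close> parts_subset code_range by fastforce
    ultimately show "card (sumset (label x) (label y)) = 1 \<longrightarrow> {x, y} \<in> (\<lambda>(y, z). {y, z}) ` (Y \<times> Z)"
      by (simp add: sumset_label_XY)
  next
    fix x z assume "x \<in> X" "z \<in> Z"
    moreover have "0 < g x" using \<open>x \<in> X\<close> parts_subset code_range by fastforce
    ultimately show "card (sumset (label x) (label z)) = 1 \<longrightarrow> {x, z} \<in> (\<lambda>(y, z). {y, z}) ` (Y \<times> Z)"
      by (simp add: sumset_label_XZ)
  qed (auto simp: sumset_commute insert_commute)
  then show "e \<in> (\<lambda>(y, z). {y, z}) ` (Y \<times> Z)"
    using e by blast
qed

lemma card_mono_indexed_edges_label: "card (mono_indexed_edges E label) \<le> card Y * card Z"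
proof -
  have "finite (Y \<times> Z)"
    using bisplit unfolding complete_bisplit_def simple_graph_def by auto
  then have "card (mono_indexed_edges E label) \<le> card ((\<lambda>(y, z). {y, z}) ` (Y \<times> Z))"
    using mono_indexed_edges_label by (intro card_mono) simp_all
  also have "\<dots> \<le> card (Y \<times> Z)"
    using \<open>finite (Y \<times> Z)\<close> by (rule card_image_le)
  finally show ?thesis
    by (simp add: card_cartesian_product)
qed

end

lemma complete_bisplit_obtain_weak_iasi:
  assumes "complete_bisplit V E X Y Z"
  obtains f where "weak_iasi V E f" "card (mono_indexed_edges E f) \<le> card Y * card Z"
proof -
  have "finite V"
    using assms unfolding complete_bisplit_def simple_graph_def by blast
  then obtain h where h: "bij_betw h V {0..<card V}"
    using ex_bij_betw_finite_nat by blast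
  interpret bisplit_labelling V E X Y Z "\<lambda>w. h w + 1" "card V + 1"
  proof
    show "inj_on (\<lambda>w. h w + 1) V"
      using h unfolding bij_betw_def inj_on_def by simp
    show "1 \<le> h w + 1 \<and> h w + 1 < card V + 1" if "w \<in> V" for w
      using h that unfolding bij_betw_def by auto
  qed (fact assms)
  show ?thesis
    using that weak_iasi_label card_mono_indexed_edges_label .
qed

lemma sparing_number_complete_bisplit_le:
  assumes "complete_bisplit V E X Y Z"
  shows "sparing_number V E \<le> card Y * card Z"
proof -
  obtain f where "weak_iasi V E f" "card (mono_indexed_edges E f) \<le> card Y * card Z"
    using complete_bisplit_obtain_weak_iasi[OF assms] .
  then show ?thesis
    using sparing_number_le le_trans by blast
qed

lemma sparing_number_complete_bisplit_ge:
  assumes "complete_bisplit V E X Y Z"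
  shows "min (card X * card Y) (min (card X * card Z) (card Y * card Z)) \<le> sparing_number V E"
proof -
  obtain f\<^sub>0 where "weak_iasi V E f\<^sub>0"
    using complete_bisplit_obtain_weak_iasi[OF assms] .
  then obtain f where "weak_iasi V E f" "sparing_number V E = card (mono_indexed_edges E f)"
    by (rule sparing_number_attained)
  then show ?thesis
    using complete_bisplit_mono_indexed_edges_ge[OF assms] by simp
qed

lemma sort_product_two_least:
  "sort [a :: nat, b, c] ! 0 * sort [a, b, c] ! 1 = min (a * b) (min (a * c) (b * c))"
  by (auto simp: min_def mult_le_mono)

theorem proposition2p9:
  fixes V X Y Z :: "'a set" and E :: "'a set set"
  assumes "complete_bisplit V E X Y Z"
  shows "sparing_number V E =
           sort [card X, card Y, card Z] ! 0 * sort [card X, card Y, card Z] ! 1"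
proof -
  have "complete_bisplit V E Y X Z" "complete_bisplit V E Z X Y"
    using assms complete_bisplit_swap_first complete_bisplit_swap_last by blast+
  then have "sparing_number V E \<le> card Y * card Z" "sparing_number V E \<le> card X * card Z"
    "sparing_number V E \<le> card X * card Y"
    using assms by (simp_all add: sparing_number_complete_bisplit_le)
  moreover have "min (card X * card Y) (min (card X * card Z) (card Y * card Z)) \<le> sparing_number V E"
    using assms by (rule sparing_number_complete_bisplit_ge)
  ultimately show ?thesis
    unfolding sort_product_two_least by linarith
qed

end
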